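(* Every equivalence class of the free set-operad $\mathcal{G}_4$ modulo the congruence generated by the eight relations below contains exactly one canonical tree. (In particular the canonical trees with $n$ leaves are in bijection with $\mathcal{GR}_4(n)$.)
   Context: $\mathcal{G}_4$ is the free set-operad on four binary generators $\prec$, $\mu$, $\succ$, $\odot$ (the paper denotes $\mu$ by a circle). Its elements of arity $n$ are planar binary trees with $n$ leaves whose internal nodes are labelled by generators; for generators $a,b$, $a\circ_1 b$ is the tree with root $a$ whose left child is an internal node $b$, and $a\circ_2 b$ the tree with root $a$ whose right child is an internal node $b$. $\mathcal{GR}_4$ is the quotient of $\mathcal{G}_4$ by the smallest operad congruence containing the eight relations $\prec\circ_1\succ=\succ\circ_2\prec$, $\mu\circ_1\mu=\mu\circ_2\mu$, $\mu\circ_1\succ=\succ\circ_2\mu$, $\mu\circ_1\prec=\mu\circ_2\succ$, $\prec\circ_1\mu=\mu\circ_2\prec$, $\odot\circ_1\odot=\odot\circ_2\odot$, $\prec\circ_1\prec=\prec\circ_2\odot$, $\succ\circ_1\odot=\succ\circ_2\succ$ (in algebra notation: $(x\succ y)\prec z=x\succ(y\prec z)$, $(x\mu y)\mu z=x\mu(y\mu z)$, $(x\succ y)\mu z=x\succ(y\mu z)$, $(x\prec y)\mu z=x\mu(y\succ z)$, $(x\mu y)\prec z=x\mu(y\prec z)$, $(x\odot y)\odot z=x\odot(y\odot z)$, $(x\prec y)\prec z=x\prec(y\odot z)$, $(x\odot y)\succ z=x\succ(y\succ z)$). A tree of $\mathcal{G}_4$ is canonical if it contains none of the right-hand-side patterns,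 i.e. there is no internal node labelled $a$ whose right child is an internal node labelled $b$ for $(a,b)\in\{(\succ,\prec),(\mu,\mu),(\succ,\mu),(\mu,\succ),(\mu,\prec),(\odot,\odot),(\prec,\odot),(\succ,\succ)\}$. *)

theory Defs
  imports Main
begin

text \<open>The four binary generators: Lt = \<prec>, Mu = \<mu> (circle), Gt = \<succ>, Od = \<odot>.\<close>
datatype gen = Lt | Mu | Gt | Od

text \<open>Elements of the free set-operad G4: planar binary trees with internal
nodes labelled by generators; the arity is the number of leaves.\<close>
datatype tree = Leaf | Node gen tree tree

fun leaves :: "tree \<Rightarrow> nat" where
  "leaves Leaf = 1"
| "leaves (Node g l r) = leaves l + leaves r"

text \<open>Partial composition: graft x i y = x \<circ>_i y, substituting y into the
i-th leaf of x (leaves numbered 1,2,... from left to right).\<close>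
fun graft :: "tree \<Rightarrow> nat \<Rightarrow> tree \<Rightarrow> tree" where
  "graft Leaf i y = (if i = 1 then y else Leaf)"
| "graft (Node g l r) i y =
     (if i \<le> leaves l then Node g (graft l i y) r
      else Node g l (graft r (i - leaves l) y))"

definition comp1 :: "gen \<Rightarrow> gen \<Rightarrow> tree" where
  "comp1 a b = Node a (Node b Leaf Leaf) Leaf"
definition comp2 :: "gen \<Rightarrow> gen \<Rightarrow> tree" where
  "comp2 a b = Node a Leaf (Node b Leaf Leaf)"

definition relations :: "(tree \<times> tree) set" where
  "relations = {
     (comp1 Lt Gt, comp2 Gt Lt),
     (comp1 Mu Mu, comp2 Mu Mu),
     (comp1 Mu Gt, comp2 Gt Mu),
     (comp1 Mu Lt, comp2 Mu Gt),
     (comp1 Lt Mu, comp2 Mu Lt),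
     (comp1 Od Od, comp2 Od Od),
     (comp1 Lt Lt, comp2 Lt Od),
     (comp1 Gt Od, comp2 Gt Gt)}"

inductive gr4_cong :: "tree \<Rightarrow> tree \<Rightarrow> bool" where
  base: "(x, y) \<in> relations \<Longrightarrow> gr4_cong x y"
| refl: "gr4_cong x x"
| sym: "gr4_cong x y \<Longrightarrow> gr4_cong y x"
| trans: "gr4_cong x y \<Longrightarrow> gr4_cong y z \<Longrightarrow> gr4_cong x z"
| comp: "gr4_cong x x' \<Longrightarrow> gr4_cong y y' \<Longrightarrow> 1 \<le> i \<Longrightarrow> i \<le> leaves x \<Longrightarrow>
         gr4_cong (graft x i y) (graft x' i y')"

text \<open>Forbidden right-hand-side patterns (a, b): node a with right child node b.\<close>
definition forbidden :: "(gen \<times> gen) set" where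
  "forbidden = {(Gt, Lt), (Mu, Mu), (Gt, Mu), (Mu, Gt), (Mu, Lt), (Od, Od), (Lt, Od), (Gt, Gt)}"

fun canonical :: "tree \<Rightarrow> bool" where
  "canonical Leaf = True"
| "canonical (Node a l r) =
     (canonical l \<and> canonical r \<and>
      (case r of Leaf \<Rightarrow> True | Node b _ _ \<Rightarrow> (a, b) \<notin> forbidden))"

end

theory Submission
  imports Defs "HOL-Library.Confluence"
begin

text \<open>Orient every relation from its right-hand side \<open>a \<circ>\<^sub>2 b\<close> to its left-hand side
\<open>a' \<circ>\<^sub>1 b'\<close> and apply it anywhere in a tree. Since \<open>(x a (y b z)) \<mapsto> ((x b' y) a' z)\<close>
moves \<open>y\<close> from a right to a left branch, the number of leaves lying in right subtrees,
summed over all nodes, strictly decreases, so rewriting terminates; its normal forms are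
exactly the canonical trees. The only critical pairs are overlaps \<open>x a (y b (u c v))\<close> of
two right-hand sides, and all of them are joinable, so by Newman's lemma rewriting is
confluent. As rewriting generates the operad congruence, every class contains exactly one
normal form.\<close>

lemma newman:
  assumes wf: "wfp r\<inverse>\<inverse>"
    and local_confluent: "\<And>x y z. r x y \<Longrightarrow> r x z \<Longrightarrow> \<exists>u. r\<^sup>*\<^sup>* y u \<and> r\<^sup>*\<^sup>* z u"
  shows "confluentp r"
proof (rule confluentpI)
  show "\<exists>u. r\<^sup>*\<^sup>* y u \<and> r\<^sup>*\<^sup>* z u" if "r\<^sup>*\<^sup>* x y" "r\<^sup>*\<^sup>* x z" for x y z
    using wf that
  proof (induction x arbitrary: y z rule: wfp_induct_rule)
    case (less x)
    show ?case
    proof (cases "x = y \<or> x = z")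
      case True
      with less.prems show ?thesis by blast
    next
      case False
      with less.prems obtain y1 z1 where y1: "r x y1" "r\<^sup>*\<^sup>* y1 y" and z1: "r x z1" "r\<^sup>*\<^sup>* z1 z"
        by (metis converse_rtranclpE)
      obtain u where u: "r\<^sup>*\<^sup>* y1 u" "r\<^sup>*\<^sup>* z1 u"
        using local_confluent[OF y1(1) z1(1)] by blast
      obtain v where v: "r\<^sup>*\<^sup>* y v" "r\<^sup>*\<^sup>* u v"
        using less.IH[of y1 y u] y1 u(1) by blast
      obtain w where "r\<^sup>*\<^sup>* v w" "r\<^sup>*\<^sup>* z w"
        using less.IH[of z1 v z] z1 u(2) v(2) by (meson conversepI rtranclp_trans)
      with v(1) show ?thesis by (blast intro: rtranclp_trans)
    qed
  qed
qed

lemma ex1_normal_form_equivclp: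
  assumes wf: "wfp r\<inverse>\<inverse>" and confluent: "confluentp r"
  shows "\<exists>!c. (\<nexists>d. r c d) \<and> equivclp r t c"
proof -
  have "\<exists>c. r\<^sup>*\<^sup>* t c \<and> (\<nexists>d. r c d)"
    using wf
  proof (induction t rule: wfp_induct_rule)
    case (less t)
    then show ?case
      by (metis conversepI converse_rtranclp_into_rtranclp rtranclp.rtrancl_refl)
  qed
  then obtain c where c: "r\<^sup>*\<^sup>* t c" "\<nexists>d. r c d" by blast
  have "c' = c" if c': "\<nexists>d. r c' d" "equivclp r t c'" for c'
  proof -
    have "equivclp r c c'"
      using c(1) c'(2) by (blast intro: equivclp_trans equivclp_sym rtranclp_into_equivclp)
    then obtain u where "r\<^sup>*\<^sup>* c u" "r\<^sup>*\<^sup>* c' u"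
      using semiconfluentp_equivclp confluent confluentp_eq_semiconfluentp
      by (metis relcomppE rtranclp_conversep conversepD)
    with c(2) c'(1) show ?thesis by (metis converse_rtranclpE)
  qed
  with c show ?thesis by (blast intro: rtranclp_into_equivclp)
qed

lemma rtranclp_compatible:
  assumes "\<And>u v. r u v \<Longrightarrow> r (f u) (f v)" and "r\<^sup>*\<^sup>* x y"
  shows "r\<^sup>*\<^sup>* (f x) (f y)"
  using assms(2) by induction (auto intro: assms(1) rtranclp.rtrancl_into_rtrancl)

lemma equivclp_compatible:
  assumes "\<And>u v. r u v \<Longrightarrow> r (f u) (f v)" and "equivclp r x y"
  shows "equivclp r (f x) (f y)"
  using assms(2) by induction (auto intro: assms(1) equivclp_into_equivclp)

lemma relations_comp_iff:
  "(comp1 a' b', comp2 a b) \<in> relations \<longleftrightarrow>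
     (a, b, a', b') \<in> {(Gt, Lt, Lt, Gt), (Mu, Mu, Mu, Mu), (Gt, Mu, Mu, Gt), (Mu, Gt, Mu, Lt),
                       (Mu, Lt, Lt, Mu), (Od, Od, Od, Od), (Lt, Od, Lt, Lt), (Gt, Gt, Gt, Od)}"
  by (auto simp: relations_def comp1_def comp2_def)

lemma forbidden_iff_relation:
  "(a, b) \<in> forbidden \<longleftrightarrow> (\<exists>a' b'. (comp1 a' b', comp2 a b) \<in> relations)"
  by (auto simp: relations_comp_iff forbidden_def)

lemma relation_rhs_unique:
  "(comp1 a' b', comp2 a b) \<in> relations \<Longrightarrow> (comp1 a'' b'', comp2 a b) \<in> relations \<Longrightarrow>
   a'' = a' \<and> b'' = b'"
  by (auto simp: relations_comp_iff)

lemma relations_critical_pair: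
  assumes "(comp1 a' b', comp2 a b) \<in> relations" and "(comp1 c' c'', comp2 b c) \<in> relations"
  obtains a3 b3 b5 where "(comp1 a3 b3, comp2 a' c) \<in> relations"
    and "(comp1 a3 b5, comp2 a c') \<in> relations" and "(comp1 b3 b', comp2 b5 c'') \<in> relations"
  using assms by (auto simp: relations_comp_iff)

inductive rewrite :: "tree \<Rightarrow> tree \<Rightarrow> bool" where
  root: "(comp1 a' b', comp2 a b) \<in> relations \<Longrightarrow>
         rewrite (Node a x (Node b y z)) (Node a' (Node b' x y) z)"
| left: "rewrite l l' \<Longrightarrow> rewrite (Node a l r) (Node a l' r)"
| right: "rewrite r r' \<Longrightarrow> rewrite (Node a l r) (Node a l r')"

inductive_cases rewrite_LeafE[elim!]: "rewrite Leaf t"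

lemma rewrite_NodeE:
  assumes "rewrite (Node a l r) t"
  obtains (root) b y z a' b' where "r = Node b y z" "t = Node a' (Node b' l y) z"
      "(comp1 a' b', comp2 a b) \<in> relations"
  | (left) l' where "t = Node a l' r" "rewrite l l'"
  | (right) r' where "t = Node a l r'" "rewrite r r'"
  using assms by (cases rule: rewrite.cases) auto

lemma leaves_pos: "0 < leaves t"
  by (induction t) auto

lemma rewrite_leaves: "rewrite t u \<Longrightarrow> leaves u = leaves t"
  by (induction rule: rewrite.induct) auto

fun right_weight :: "tree \<Rightarrow> nat" where
  "right_weight Leaf = 0"
| "right_weight (Node a l r) = right_weight l + right_weight r + leaves r"

lemma rewrite_right_weight: "rewrite t u \<Longrightarrow> right_weight u < right_weight t"
  by (induction rule: rewrite.induct) (auto simp: rewrite_leaves leaves_pos)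

lemma wfp_rewrite_conversep: "wfp rewrite\<inverse>\<inverse>"
  by (rule wfp_if_convertible_to_nat[of _ right_weight]) (simp add: rewrite_right_weight)

lemma canonical_iff_rewrite_normal: "canonical t \<longleftrightarrow> (\<nexists>u. rewrite t u)"
proof (induction t)
  case Leaf
  then show ?case by auto
next
  case (Node a l r)
  have "(case r of Leaf \<Rightarrow> True | Node b _ _ \<Rightarrow> (a, b) \<notin> forbidden) \<longleftrightarrow>
        (\<nexists>b y z a' b'. r = Node b y z \<and> (comp1 a' b', comp2 a b) \<in> relations)"
    by (cases r) (auto simp: forbidden_iff_relation)
  then show ?case
    using Node.IH by (auto elim!: rewrite_NodeE intro: rewrite.intros)
qed

lemma rewrite_root_local_confluent:
  assumes root: "(comp1 a' b', comp2 a b) \<in> relations"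
    and other: "rewrite (Node a x (Node b y z)) t"
  shows "\<exists>u. rewrite\<^sup>*\<^sup>* (Node a' (Node b' x y) z) u \<and> rewrite\<^sup>*\<^sup>* t u"
  using other
proof (cases rule: rewrite_NodeE)
  case root
  with relation_rhs_unique[OF assms(1)] show ?thesis by auto
next
  case (left x')
  with root show ?thesis
    by (metis rewrite.left rewrite.root r_into_rtranclp)
next
  case (right r')
  from right(2) show ?thesis
  proof (cases rule: rewrite_NodeE)
    case (root c u v c' c'')
    then obtain a3 b3 b5 where h: "(comp1 a3 b3, comp2 a' c) \<in> relations"
      "(comp1 a3 b5, comp2 a c') \<in> relations" "(comp1 b3 b', comp2 b5 c'') \<in> relations"
      using relations_critical_pair[OF assms(1)] by blast
    have "rewrite (Node a' (Node b' x y) z) (Node a3 (Node b3 (Node b' x y) u) v)"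
      using h(1) root by (auto intro: rewrite.root)
    moreover have "rewrite t (Node a3 (Node b5 x (Node c'' y u)) v)"
      using h(2) root right by (auto intro: rewrite.root)
    moreover have "rewrite (Node a3 (Node b5 x (Node c'' y u)) v) (Node a3 (Node b3 (Node b' x y) u) v)"
      using h(3) by (auto intro: rewrite.root rewrite.left)
    ultimately show ?thesis
      by (meson r_into_rtranclp converse_rtranclp_into_rtranclp)
  next
    case (left y')
    with right assms(1) have "rewrite (Node a' (Node b' x y) z) (Node a' (Node b' x y') z)"
      and "rewrite t (Node a' (Node b' x y') z)"
      by (auto intro: rewrite.intros)
    then show ?thesis by blast
  next
    case (right z')
    with \<open>t = Node a x r'\<close> root show ?thesis
      by (metis rewrite.right rewrite.root r_into_rtranclp)
  qed
qed

lemma rewrite_local_confluent: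
  "rewrite t t1 \<Longrightarrow> rewrite t t2 \<Longrightarrow> \<exists>u. rewrite\<^sup>*\<^sup>* t1 u \<and> rewrite\<^sup>*\<^sup>* t2 u"
proof (induction t t1 arbitrary: t2 rule: rewrite.induct)
  case (root a' b' a b x y z)
  then show ?case by (rule rewrite_root_local_confluent)
next
  case (left l l' a r)
  from left.prems show ?case
  proof (cases rule: rewrite_NodeE)
    case root
    then show ?thesis
      using rewrite_root_local_confluent rewrite.left[OF left.hyps] by metis
  next
    case (left l2)
    with left.IH obtain u where "rewrite\<^sup>*\<^sup>* l' u" "rewrite\<^sup>*\<^sup>* l2 u" by blast
    with left show ?thesis
      by (blast intro: rtranclp_compatible[where f = "\<lambda>l. Node a l r"] rewrite.left)
  next
    case (right r2)
    then show ?thesis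
      using left.hyps by (meson r_into_rtranclp rewrite.left rewrite.right)
  qed
next
  case (right r r' a l)
  from right.prems show ?case
  proof (cases rule: rewrite_NodeE)
    case root
    then show ?thesis
      using rewrite_root_local_confluent rewrite.right[OF right.hyps] by metis
  next
    case (left l2)
    then show ?thesis
      using right.hyps by (meson r_into_rtranclp rewrite.left rewrite.right)
  next
    case (right r2)
    with right.IH obtain u where "rewrite\<^sup>*\<^sup>* r' u" "rewrite\<^sup>*\<^sup>* r2 u" by blast
    with right show ?thesis
      by (blast intro: rtranclp_compatible[where f = "\<lambda>r. Node a l r"] rewrite.right)
  qed
qed

lemma rewrite_graft_left: "rewrite x x' \<Longrightarrow> rewrite (graft x i y) (graft x' i y)"
proof (induction x x' arbitrary: i rule: rewrite.induct)
  case (root a' b' a b x1 y1 z1)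
  then show ?case by (auto intro: rewrite.root simp: diff_diff_add)
next
  case (left l l' a r)
  then show ?case by (auto intro: rewrite.left rewrite.right simp: rewrite_leaves)
next
  case (right r r' a l)
  then show ?case by (auto intro: rewrite.left rewrite.right simp: rewrite_leaves)
qed

lemma rewrite_graft_right:
  "rewrite y y' \<Longrightarrow> 1 \<le> i \<Longrightarrow> i \<le> leaves x \<Longrightarrow> rewrite (graft x i y) (graft x i y')"
  by (induction x arbitrary: i) (auto intro: rewrite.left rewrite.right)

lemma equivclp_rewrite_leaves: "equivclp rewrite x y \<Longrightarrow> leaves y = leaves x"
  by (induction rule: equivclp_induct) (auto simp: rewrite_leaves)

lemma relation_rewrite: "(x, y) \<in> relations \<Longrightarrow> rewrite y x"
  unfolding relations_def comp1_def comp2_def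
  by (elim insertE emptyE; simp; rule rewrite.root; simp add: relations_comp_iff)

lemma gr4_cong_equivclp_rewrite: "gr4_cong x y \<Longrightarrow> equivclp rewrite x y"
proof (induction rule: gr4_cong.induct)
  case (base x y)
  then show ?case by (blast dest: relation_rewrite)
next
  case (comp x x' y y' i)
  have "equivclp rewrite (graft x i y) (graft x' i y)"
    by (rule equivclp_compatible[of rewrite "\<lambda>t. graft t i y"])
      (auto intro: rewrite_graft_left comp.IH(1))
  also have "equivclp rewrite (graft x' i y) (graft x' i y')"
    using comp.hyps(3,4) equivclp_rewrite_leaves[OF comp.IH(1)]
    by (intro equivclp_compatible[of rewrite "graft x' i"] comp.IH(2)) (auto intro: rewrite_graft_right)
  finally show ?case .
qed (auto intro: equivclp_sym equivclp_trans)

lemma gr4_cong_graft_left: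
  "gr4_cong x x' \<Longrightarrow> 1 \<le> i \<Longrightarrow> i \<le> leaves x \<Longrightarrow> gr4_cong (graft x i y) (graft x' i y)"
  by (rule gr4_cong.comp[OF _ gr4_cong.refl])

lemma gr4_cong_graft_right:
  "gr4_cong y y' \<Longrightarrow> 1 \<le> i \<Longrightarrow> i \<le> leaves x \<Longrightarrow> gr4_cong (graft x i y) (graft x i y')"
  by (rule gr4_cong.comp[OF gr4_cong.refl])

lemma rewrite_gr4_cong: "rewrite x y \<Longrightarrow> gr4_cong x y"
proof (induction rule: rewrite.induct)
  case (root a' b' a b x y z)
  have "gr4_cong (comp2 a b) (comp1 a' b')"
    using root by (blast intro: gr4_cong.sym gr4_cong.base)
  \<comment> \<open>Substitute \<open>z\<close>, \<open>y\<close>, \<open>x\<close> into the relation, last leaf first so that the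
    positions 3, 2, 1 stay valid.\<close>
  then have "gr4_cong (graft (comp2 a b) 3 z) (graft (comp1 a' b') 3 z)"
    by (rule gr4_cong_graft_left) (simp_all add: comp2_def)
  then have "gr4_cong (graft (graft (comp2 a b) 3 z) 2 y) (graft (graft (comp1 a' b') 3 z) 2 y)"
    by (rule gr4_cong_graft_left) (simp_all add: comp2_def leaves_pos)
  then have "gr4_cong (graft (graft (graft (comp2 a b) 3 z) 2 y) 1 x)
      (graft (graft (graft (comp1 a' b') 3 z) 2 y) 1 x)"
    by (rule gr4_cong_graft_left) (simp_all add: comp2_def leaves_pos)
  then show ?case by (simp add: comp1_def comp2_def)
next
  case (left l l' a r)
  from left.IH have "gr4_cong (graft (Node a Leaf r) 1 l) (graft (Node a Leaf r) 1 l')"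
    by (rule gr4_cong_graft_right) simp_all
  then show ?case by simp
next
  case (right r r' a l)
  from right.IH have "gr4_cong (graft (Node a l Leaf) (leaves l + 1) r) (graft (Node a l Leaf) (leaves l + 1) r')"
    by (rule gr4_cong_graft_right) simp_all
  then show ?case by simp
qed

lemma gr4_cong_eq_equivclp_rewrite: "gr4_cong = equivclp rewrite"
proof (intro ext iffI)
  show "equivclp rewrite x y" if "gr4_cong x y" for x y
    using that by (rule gr4_cong_equivclp_rewrite)
  show "gr4_cong x y" if "equivclp rewrite x y" for x y
    using that by induction (blast intro: gr4_cong.refl gr4_cong.sym gr4_cong.trans rewrite_gr4_cong)+
qed

lemma confluentp_rewrite: "confluentp rewrite"
  using wfp_rewrite_conversep rewrite_local_confluent by (rule newman)

theorem mainTheorem3: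
  shows "\<forall>t. \<exists>!c. canonical c \<and> gr4_cong t c"
  unfolding gr4_cong_eq_equivclp_rewrite canonical_iff_rewrite_normal
  using ex1_normal_form_equivclp[OF wfp_rewrite_conversep confluentp_rewrite] by blast

end
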